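(* Let $(\mathbb S,+,\cdot)$ be an S-Field, let $s\in\mathbb S$ and $m,n\in\mathbb S_0$ with $m\neq 0$. Then $n\cdot\left(\frac{s}{m}\right)=\frac{n\cdot s}{m}$.
   Context: An S-Structure is a triple $(\mathbb S,+,\cdot)$ where $\mathbb S$ is a set and $+,\cdot$ are binary operations on $\mathbb S$ such that: $(\mathbb S,+)$ is a commutative group with identity $0$ (the inverse of $s$ is written $-s$, and $s-t:=s+(-t)$); $\mathbb S$ is closed under $\cdot$; and there exists $s\in\mathbb S$ with $0\cdot s\neq 0$ or $s\cdot 0\neq 0$. Multiplication binds tighter than addition. The structures considered come with a distinguished element of $\mathbb S$ denoted $1$. It is Commutative if $s\cdot t=t\cdot s$ for all $s,t$. For a Commutative S-Structure and $\alpha\in\mathbb S$, put $\mathbb S_\alpha=\{s\in\mathbb S:0\cdot s=s\cdot 0=\alpha\}$ and $\Lambda=\{\alpha\in\mathbb S:\mathbb S_\alpha\neq\emptyset\}$. Wheel Distributive: $s\cdot(t+r)+(s\cdot 0)=(s\cdot t)+(s\cdot r)$ for all $s,t,r\in\mathbb S$. S-Associative: for all $m,n\in\mathbb S_0$ and $s\in\mathbb S$, $m\cdot(n\cdot s)=(m\cdot n)\cdot s-([(m-1)\cdot(n-1)]\cdot(0\cdot s))$. Base: if $\mathbb S_0\neq\emptyset$ and $\alpha\in\Lambda$, $q\in\mathbb S_\alpha$ is a Base for $\mathbb S_\alpha$ if $q+\beta\in\mathbb S_\alpha$ for all $\beta\in\mathbb S_0$ and every $s\in\mathbb S_\alpha$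 equals $q+\beta$ for some $\beta\in\mathbb S_0$. Coordinated: $\mathbb S_0\neq\emptyset$ and every $\mathbb S_\alpha$ with $\alpha\in\Lambda$ has a Base. Standard Bases: a Coordinated Commutative S-Structure has Standard Bases if there is a specified element $q_0(1)\in\mathbb S_1$ which is a Base for $\mathbb S_1$, and for every $\alpha\in\Lambda$ the element $q_0(\alpha):=\alpha\cdot(q_0(1)+1)-1$ lies in $\mathbb S_\alpha$ and is a Base for $\mathbb S_\alpha$. An Essential S-Structure is an S-Structure that is Commutative, Wheel Distributive, S-Associative, has Standard Bases (in particular is Coordinated), satisfies $0,1\in\mathbb S_0$, and satisfies $\mathbb S_0=\{1\cdot x:x\in\mathbb S_0\}$. A Unity is an element $e\in\Lambda$ with $e\cdot s=s\cdot e=s$ for all $s\in\mathbb S$. Scalar Inverses: the structure has a Unity $e$ and for every $x\in\mathbb S_0$ with $x\neq 0$ there is $x^{-1}\in\mathbb S_0$ with $x\cdot x^{-1}=x^{-1}\cdot x=e$. An S-Ring is an Essential S-Structure with a Unity; an S-Field is an S-Ring with Scalar Inverses. Division By Scalars: for $s\in\mathbb S$ and $m\in\mathbb S_0$, $\frac{s}{m}$ denotes an element $q\in\mathbb S$ such that $s=m\cdot q=q\cdot m$. *)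

theory Defs
  imports Main
begin

text \<open>An S-Structure is modelled on a type 'a (the set S is the whole type, so closure
  under + and * is automatic).\<close>

definition S_structure :: "('a \<Rightarrow> 'a \<Rightarrow> 'a) \<Rightarrow> ('a \<Rightarrow> 'a \<Rightarrow> 'a) \<Rightarrow> 'a \<Rightarrow> ('a \<Rightarrow> 'a) \<Rightarrow> bool" where
  "S_structure add mul z neg \<longleftrightarrow>
     (\<forall>a b c. add (add a b) c = add a (add b c)) \<and>
     (\<forall>a b. add a b = add b a) \<and>
     (\<forall>a. add z a = a \<and> add a z = a) \<and>
     (\<forall>a. add a (neg a) = z \<and> add (neg a) a = z) \<and>
     (\<exists>s. mul z s \<noteq> z \<or> mul s z \<noteq> z)"

definition ssub :: "('a \<Rightarrow> 'a \<Rightarrow> 'a) \<Rightarrow> ('a \<Rightarrow> 'a) \<Rightarrow> 'a \<Rightarrow> 'a \<Rightarrow> 'a" where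
  "ssub add neg s t = add s (neg t)"

definition S_commutative :: "('a \<Rightarrow> 'a \<Rightarrow> 'a) \<Rightarrow> bool" where
  "S_commutative mul \<longleftrightarrow> (\<forall>s t. mul s t = mul t s)"

definition S_sub :: "('a \<Rightarrow> 'a \<Rightarrow> 'a) \<Rightarrow> 'a \<Rightarrow> 'a \<Rightarrow> 'a set" where
  "S_sub mul z \<alpha> = {s. mul z s = \<alpha> \<and> mul s z = \<alpha>}"

definition S_Lambda :: "('a \<Rightarrow> 'a \<Rightarrow> 'a) \<Rightarrow> 'a \<Rightarrow> 'a set" where
  "S_Lambda mul z = {\<alpha>. S_sub mul z \<alpha> \<noteq> {}}"

definition wheel_distributive :: "('a \<Rightarrow> 'a \<Rightarrow> 'a) \<Rightarrow> ('a \<Rightarrow> 'a \<Rightarrow> 'a) \<Rightarrow> 'a \<Rightarrow> bool" where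
  "wheel_distributive add mul z \<longleftrightarrow>
     (\<forall>s t r. add (mul s (add t r)) (mul s z) = add (mul s t) (mul s r))"

definition S_associative ::
  "('a \<Rightarrow> 'a \<Rightarrow> 'a) \<Rightarrow> ('a \<Rightarrow> 'a \<Rightarrow> 'a) \<Rightarrow> 'a \<Rightarrow> ('a \<Rightarrow> 'a) \<Rightarrow> 'a \<Rightarrow> bool" where
  "S_associative add mul z neg one \<longleftrightarrow>
     (\<forall>m \<in> S_sub mul z z. \<forall>n \<in> S_sub mul z z. \<forall>s.
        mul m (mul n s) =
          ssub add neg (mul (mul m n) s)
            (mul (mul (ssub add neg m one) (ssub add neg n one)) (mul z s)))"

definition is_base :: "('a \<Rightarrow> 'a \<Rightarrow> 'a) \<Rightarrow> ('a \<Rightarrow> 'a \<Rightarrow> 'a) \<Rightarrow> 'a \<Rightarrow> 'a \<Rightarrow> 'a \<Rightarrow> bool" where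
  "is_base add mul z \<alpha> q \<longleftrightarrow>
     S_sub mul z z \<noteq> {} \<and> \<alpha> \<in> S_Lambda mul z \<and> q \<in> S_sub mul z \<alpha> \<and>
     (\<forall>\<beta> \<in> S_sub mul z z. add q \<beta> \<in> S_sub mul z \<alpha>) \<and>
     (\<forall>s \<in> S_sub mul z \<alpha>. \<exists>\<beta> \<in> S_sub mul z z. s = add q \<beta>)"

definition coordinated :: "('a \<Rightarrow> 'a \<Rightarrow> 'a) \<Rightarrow> ('a \<Rightarrow> 'a \<Rightarrow> 'a) \<Rightarrow> 'a \<Rightarrow> bool" where
  "coordinated add mul z \<longleftrightarrow>
     S_sub mul z z \<noteq> {} \<and> (\<forall>\<alpha> \<in> S_Lambda mul z. \<exists>q. is_base add mul z \<alpha> q)"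

definition standard_bases ::
  "('a \<Rightarrow> 'a \<Rightarrow> 'a) \<Rightarrow> ('a \<Rightarrow> 'a \<Rightarrow> 'a) \<Rightarrow> 'a \<Rightarrow> ('a \<Rightarrow> 'a) \<Rightarrow> 'a \<Rightarrow> 'a \<Rightarrow> bool" where
  "standard_bases add mul z neg one q1 \<longleftrightarrow>
     coordinated add mul z \<and> S_commutative mul \<and>
     q1 \<in> S_sub mul z one \<and> is_base add mul z one q1 \<and>
     (\<forall>\<alpha> \<in> S_Lambda mul z.
        ssub add neg (mul \<alpha> (add q1 one)) one \<in> S_sub mul z \<alpha> \<and>
        is_base add mul z \<alpha> (ssub add neg (mul \<alpha> (add q1 one)) one))"

definition essential_S_structure ::
  "('a \<Rightarrow> 'a \<Rightarrow> 'a) \<Rightarrow> ('a \<Rightarrow> 'a \<Rightarrow> 'a) \<Rightarrow> 'a \<Rightarrow> ('a \<Rightarrow> 'a) \<Rightarrow> 'a \<Rightarrow> 'a \<Rightarrow> bool" where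
  "essential_S_structure add mul z neg one q1 \<longleftrightarrow>
     S_structure add mul z neg \<and> S_commutative mul \<and> wheel_distributive add mul z \<and>
     S_associative add mul z neg one \<and> standard_bases add mul z neg one q1 \<and>
     z \<in> S_sub mul z z \<and> one \<in> S_sub mul z z \<and>
     S_sub mul z z = {mul one x | x. x \<in> S_sub mul z z}"

definition is_unity :: "('a \<Rightarrow> 'a \<Rightarrow> 'a) \<Rightarrow> 'a \<Rightarrow> 'a \<Rightarrow> bool" where
  "is_unity mul z e \<longleftrightarrow> e \<in> S_Lambda mul z \<and> (\<forall>s. mul e s = s \<and> mul s e = s)"

definition scalar_inverses :: "('a \<Rightarrow> 'a \<Rightarrow> 'a) \<Rightarrow> 'a \<Rightarrow> bool" where
  "scalar_inverses mul z \<longleftrightarrow>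
     (\<exists>e. is_unity mul z e \<and>
        (\<forall>x \<in> S_sub mul z z. x \<noteq> z \<longrightarrow>
           (\<exists>y \<in> S_sub mul z z. mul x y = e \<and> mul y x = e)))"

definition S_ring ::
  "('a \<Rightarrow> 'a \<Rightarrow> 'a) \<Rightarrow> ('a \<Rightarrow> 'a \<Rightarrow> 'a) \<Rightarrow> 'a \<Rightarrow> ('a \<Rightarrow> 'a) \<Rightarrow> 'a \<Rightarrow> 'a \<Rightarrow> bool" where
  "S_ring add mul z neg one q1 \<longleftrightarrow>
     essential_S_structure add mul z neg one q1 \<and> (\<exists>e. is_unity mul z e)"

definition S_field ::
  "('a \<Rightarrow> 'a \<Rightarrow> 'a) \<Rightarrow> ('a \<Rightarrow> 'a \<Rightarrow> 'a) \<Rightarrow> 'a \<Rightarrow> ('a \<Rightarrow> 'a) \<Rightarrow> 'a \<Rightarrow> 'a \<Rightarrow> bool" where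
  "S_field add mul z neg one q1 \<longleftrightarrow>
     S_ring add mul z neg one q1 \<and> scalar_inverses mul z"

text \<open>Division by scalars: q is a value of s/m.\<close>
definition is_quot :: "('a \<Rightarrow> 'a \<Rightarrow> 'a) \<Rightarrow> 'a \<Rightarrow> 'a \<Rightarrow> 'a \<Rightarrow> bool" where
  "is_quot mul s m q \<longleftrightarrow> s = mul m q \<and> s = mul q m"

end

theory Submission
  imports Defs
begin

text \<open>For scalars m and n the S-associativity law is symmetric in m and n, so
  m (n q) = n (m q) = n s = m r, and it remains to cancel the nonzero scalar m.
  If m w = 0 and a is the inverse of m, S-associativity gives w = c (0 w) with the scalar
  c = (a - 1)(m - 1); multiplying by 0 shows 0 w = 0 and hence w = 0.  This needs the unity
  to be 1, which holds because otherwise inverting the scalar e - 1 and applying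
  S-associativity would force 0 s = 0 for every s.\<close>

locale S_assoc_structure =
  add: abel_semigroup add + add: group add z neg
  for add :: "'a \<Rightarrow> 'a \<Rightarrow> 'a" (infixl \<open>\<oplus>\<close> 65) and z :: 'a and neg :: "'a \<Rightarrow> 'a" +
  fixes mul :: "'a \<Rightarrow> 'a \<Rightarrow> 'a" (infixl \<open>\<otimes>\<close> 70) and one :: 'a
  assumes mul_commute: "a \<otimes> b = b \<otimes> a"
    and wheel_distrib: "s \<otimes> (t \<oplus> r) \<oplus> s \<otimes> z = s \<otimes> t \<oplus> s \<otimes> r"
    and S_assoc: "z \<otimes> m = z \<Longrightarrow> z \<otimes> n = z \<Longrightarrow>
       m \<otimes> (n \<otimes> s) = m \<otimes> n \<otimes> s \<oplus> neg ((m \<oplus> neg one) \<otimes> (n \<oplus> neg one) \<otimes> (z \<otimes> s))"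
    and zero_scalar: "z \<otimes> z = z"
    and one_scalar: "z \<otimes> one = z"
begin

lemma diff_eq_zero_imp_eq: "a \<oplus> neg b = z \<Longrightarrow> a = b"
  using add.right_cancel[of a "neg b" b] by simp

lemma scalar_distrib_left:
  assumes "z \<otimes> x = z"
  shows "x \<otimes> (a \<oplus> b) = x \<otimes> a \<oplus> x \<otimes> b"
  using wheel_distrib[of x a b] assms by (metis mul_commute add.right_neutral)

lemma scalar_mult_minus_right:
  assumes "z \<otimes> x = z"
  shows "x \<otimes> neg a = neg (x \<otimes> a)"
proof -
  have "x \<otimes> a \<oplus> x \<otimes> neg a = z"
    using scalar_distrib_left[OF assms, of a "neg a"] assms by (simp add: mul_commute)
  then show ?thesis
    by (rule add.inverse_unique[symmetric])
qed

lemma scalar_add: "z \<otimes> x = z \<Longrightarrow> z \<otimes> y = z \<Longrightarrow> z \<otimes> (x \<oplus> y) = z"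
  using scalar_distrib_left[OF zero_scalar] by simp

lemma scalar_minus: "z \<otimes> x = z \<Longrightarrow> z \<otimes> neg x = z"
  using scalar_mult_minus_right[OF zero_scalar] by simp

lemma scalar_diff_one: "z \<otimes> x = z \<Longrightarrow> z \<otimes> (x \<oplus> neg one) = z"
  using scalar_add scalar_minus one_scalar by blast

text \<open>By S-associativity the value of 0 (x w) does not depend on the scalar w, and it is 0
  for w = 0.\<close>

lemma scalar_mult:
  assumes x: "z \<otimes> x = z" and y: "z \<otimes> y = z"
  shows "z \<otimes> (x \<otimes> y) = z"
proof -
  define c where "c = (z \<oplus> neg one) \<otimes> (x \<oplus> neg one)"
  have indep: "z \<otimes> (x \<otimes> w) = neg (c \<otimes> z)" if w: "z \<otimes> w = z" for w
    using S_assoc[OF zero_scalar x, of w] x w by (simp add: c_def)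
  have "z \<otimes> (x \<otimes> z) = z"
    using x zero_scalar by (simp add: mul_commute)
  then show ?thesis
    using indep[OF y] indep[OF zero_scalar] by simp
qed

lemma scalar_mult_left_commute:
  assumes "z \<otimes> m = z" and "z \<otimes> n = z"
  shows "m \<otimes> (n \<otimes> s) = n \<otimes> (m \<otimes> s)"
  using S_assoc[OF assms, of s] S_assoc[OF assms(2,1), of s] by (metis mul_commute)

end

locale S_field_structure = S_assoc_structure +
  fixes e :: 'a
  assumes nontrivial: "\<exists>s. z \<otimes> s \<noteq> z"
    and unity: "e \<otimes> s = s"
    and scalar_inverse: "z \<otimes> x = z \<Longrightarrow> x \<noteq> z \<Longrightarrow> \<exists>y. z \<otimes> y = z \<and> x \<otimes> y = e"
begin

lemma unity_eq_one: "e = one"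
proof (rule ccontr)
  assume "e \<noteq> one"
  then have "e \<oplus> neg one \<noteq> z"
    using diff_eq_zero_imp_eq by blast
  moreover have e_scalar: "z \<otimes> e = z"
    using unity mul_commute by metis
  ultimately obtain u where u: "z \<otimes> u = z" "(e \<oplus> neg one) \<otimes> u = e"
    using scalar_inverse scalar_diff_one by blast
  define n where "n = u \<oplus> one"
  have n: "z \<otimes> n = z" "n \<oplus> neg one = u"
    using scalar_add[OF u(1) one_scalar] by (simp_all add: n_def add.assoc)
  have "z \<otimes> s = z" for s
  proof -
    have "n \<otimes> s = n \<otimes> s \<oplus> neg (z \<otimes> s)"
      using S_assoc[OF e_scalar n(1), of s] n(2) u(2) by (simp add: unity)
    then have "neg (z \<otimes> s) = z"
      using add.left_cancel[of "n \<otimes> s" z] by simp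
    then show ?thesis
      using add.inverse_inverse[of "z \<otimes> s"] by simp
  qed
  then show False
    using nontrivial by blast
qed

lemma one_mult: "one \<otimes> s = s"
  using unity unity_eq_one by simp

lemma minus_one_mult: "z \<otimes> y = z \<Longrightarrow> neg one \<otimes> y = neg y"
  using scalar_mult_minus_right[of y one] by (simp add: mul_commute one_mult)

lemma scalar_zero_mult: "z \<otimes> (z \<otimes> t) = z"
proof -
  have "neg one \<otimes> neg one = one"
    using minus_one_mult[OF scalar_minus[OF one_scalar]] by simp
  then show ?thesis
    using S_assoc[OF zero_scalar zero_scalar, of t] by (simp add: zero_scalar one_mult)
qed

lemma zero_mult_scalar_mult:
  assumes k: "z \<otimes> k = z"
  shows "z \<otimes> (k \<otimes> t) = k \<otimes> (z \<otimes> t)"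
proof -
  define T where "T = z \<otimes> t"
  have T: "z \<otimes> T = z"
    unfolding T_def by (rule scalar_zero_mult)
  have "(z \<oplus> neg one) \<otimes> (k \<oplus> neg one) \<otimes> T = neg ((k \<oplus> neg one) \<otimes> T)"
    using minus_one_mult[OF scalar_diff_one[OF k]] scalar_mult_minus_right[OF T]
    by (simp add: mul_commute)
  also have "\<dots> = neg (k \<otimes> T) \<oplus> T"
    using scalar_distrib_left[OF T] scalar_mult_minus_right[OF T] one_mult
    by (simp add: mul_commute add.inverse_distrib_swap add.commute)
  finally have "z \<otimes> (k \<otimes> t) = T \<oplus> neg (neg (k \<otimes> T) \<oplus> T)"
    using S_assoc[OF zero_scalar k, of t] k by (simp add: T_def)
  also have "\<dots> = k \<otimes> T"
    by (simp add: add.inverse_distrib_swap add.assoc[symmetric])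
  finally show ?thesis
    unfolding T_def .
qed

lemma scalar_mult_eq_zero:
  assumes m: "z \<otimes> m = z" "m \<noteq> z" and w: "m \<otimes> w = z"
  shows "w = z"
proof -
  obtain a where a: "z \<otimes> a = z" "a \<otimes> m = one"
    using scalar_inverse[OF m] unity_eq_one mul_commute by metis
  define c where "c = (a \<oplus> neg one) \<otimes> (m \<oplus> neg one)"
  have c: "z \<otimes> c = z"
    unfolding c_def using scalar_mult scalar_diff_one a(1) m(1) by blast
  have "z = w \<oplus> neg (c \<otimes> (z \<otimes> w))"
    using S_assoc[OF a(1) m(1), of w] a w by (simp add: c_def one_mult mul_commute)
  then have w_eq: "w = c \<otimes> (z \<otimes> w)"
    by (simp add: diff_eq_zero_imp_eq)
  then have "z \<otimes> w = c \<otimes> (z \<otimes> (z \<otimes> w))"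
    using zero_mult_scalar_mult[OF c] by metis
  then have "z \<otimes> w = z"
    using c scalar_zero_mult mul_commute by metis
  then show ?thesis
    using w_eq c mul_commute by metis
qed

lemma scalar_mult_left_cancel:
  assumes "z \<otimes> m = z" "m \<noteq> z" and "m \<otimes> x = m \<otimes> y"
  shows "x = y"
proof -
  have "m \<otimes> (x \<oplus> neg y) = z"
    using assms scalar_distrib_left scalar_mult_minus_right by simp
  then show ?thesis
    using scalar_mult_eq_zero[OF assms(1,2)] diff_eq_zero_imp_eq by blast
qed

lemma scalar_mult_quotient:
  assumes "z \<otimes> m = z" "m \<noteq> z" "z \<otimes> n = z"
    and "s = m \<otimes> q" and "n \<otimes> s = m \<otimes> r"
  shows "n \<otimes> q = r"
  using scalar_mult_left_cancel[OF assms(1,2)] scalar_mult_left_commute[OF assms(1,3)] assms(4,5)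
  by metis

end

lemma S_field_structureI:
  assumes "S_field add mul z neg one q1"
  obtains e where "S_field_structure add z neg mul one e"
proof -
  have S: "S_structure add mul z neg" "S_commutative mul" "wheel_distributive add mul z"
    "S_associative add mul z neg one" "z \<in> S_sub mul z z" "one \<in> S_sub mul z z"
    "scalar_inverses mul z"
    using assms unfolding S_field_def S_ring_def essential_S_structure_def by auto
  have comm: "mul a b = mul b a" for a b
    using S(2) unfolding S_commutative_def by blast
  have scalar_iff: "x \<in> S_sub mul z z \<longleftrightarrow> mul z x = z" for x
    unfolding S_sub_def using comm by auto
  obtain e where e: "is_unity mul z e"
    and inv: "\<forall>x \<in> S_sub mul z z. x \<noteq> z \<longrightarrow> (\<exists>y \<in> S_sub mul z z. mul x y = e \<and> mul y x = e)"
    using S(7) unfolding scalar_inverses_def by blast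
  have "S_field_structure add z neg mul one e"
  proof unfold_locales
    show "add (add a b) c = add a (add b c)" "add a b = add b a" "add z a = a"
      "add (neg a) a = z" for a b c
      using S(1) unfolding S_structure_def by auto
    show "mul a b = mul b a" for a b
      by (rule comm)
    show "add (mul s (add t r)) (mul s z) = add (mul s t) (mul s r)" for s t r
      using S(3) unfolding wheel_distributive_def by blast
    show "mul m (mul n s) = add (mul (mul m n) s)
        (neg (mul (mul (add m (neg one)) (add n (neg one))) (mul z s)))"
      if "mul z m = z" "mul z n = z" for m n s
      using S(4) that scalar_iff unfolding S_associative_def ssub_def by blast
    show "mul z z = z" "mul z one = z"
      using S(5,6) scalar_iff by auto
    show "\<exists>s. mul z s \<noteq> z"
      using S(1) comm unfolding S_structure_def by metis
    show "mul e s = s" for s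
      using e unfolding is_unity_def by blast
    show "\<exists>y. mul z y = z \<and> mul x y = e" if "mul z x = z" "x \<noteq> z" for x
      using inv that scalar_iff by blast
  qed
  then show ?thesis
    by (rule that)
qed

theorem proposition4p1p5:
  fixes add mul :: "'a \<Rightarrow> 'a \<Rightarrow> 'a" and z one q1 :: 'a and neg :: "'a \<Rightarrow> 'a"
    and s m n q r :: 'a
  assumes "S_field add mul z neg one q1"
    and "m \<in> S_sub mul z z" and "n \<in> S_sub mul z z" and "m \<noteq> z"
    and "is_quot mul s m q"
    and "is_quot mul (mul n s) m r"
  shows "mul n q = r"
proof -
  obtain e where "S_field_structure add z neg mul one e"
    using assms(1) by (rule S_field_structureI)
  then interpret S_field_structure add z neg mul one e .
  have "mul z m = z" "mul z n = z"
    using assms(2,3) unfolding S_sub_def by auto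
  then show ?thesis
    using scalar_mult_quotient assms(4-6) unfolding is_quot_def by blast
qed

end
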